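(* Let $E_1,\dots,E_J$ be finite-dimensional Hilbert spaces and $\mathcal{H}=E_1\times\dots\times E_J$ with the product inner product. For each $j$, let $E_j$ carry an orthonormal basis and a finite collection $G_j$ of pairwise disjoint groups of basis indices, let $K_j\ge1$ be an integer, let $\Sigma_j=\Sigma_{K_j}\subset E_j$ be the $K_j$-group-sparse model and $\|\cdot\|_{\mathcal{A}_j}$ the associated group norm. Let $\Sigma=\Sigma_1\times\dots\times\Sigma_J$ (so $\Sigma-\Sigma=\Sigma_{2K_1}\times\dots\times\Sigma_{2K_J}$) and $f(x_1,\dots,x_J)=\sum_{j=1}^J\|x_j\|_{\mathcal{A}_j}/\sqrt{K_j}$. Let $\mathcal{F}$ be a Hilbert space and $M:\mathcal{H}\to\mathcal{F}$ linear satisfying the RIP on $\Sigma-\Sigma$ with constant $\delta<1/\sqrt2$ if $J=1$, and $\delta<\sqrt{1/(2+J)}$ if $J\ge2$. Then for all $x_0\in\Sigma$, $e\in\mathcal{F}$, and $\eta\le\epsilon$ with $\|e\|_{\mathcal{F}}\le\eta$, any minimizer $x^*$ of $\min_{x\in\mathcal{H}}f(x)$ subject to $\|Mx-(Mx_0+e)\|_{\mathcal{F}}\le\epsilon$ satisfies $$\|x^*-x_0\|_{\mathcal{H}}\le\|x^*-x_0\|_\Sigma\le C\,(\eta+\epsilon),$$ where $C=\dfrac{2\sqrt{1+\delta}}{1-\delta\sqrt2}$ if $J=1$ and $C=\dfrac{(1+\sqrt{1+J})\sqrt{1+\delta}}{1-\delta\sqrt{2+J}}$ if $J\ge2$.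
   Context: For a finite-dimensional Hilbert space $E$ with orthonormal basis $(e_i)$ and finite collection $G$ of pairwise disjoint index sets (groups): $x_g=\sum_{i\in g}\langle x,e_i\rangle e_i$; the group support of $x$ is the smallest $H\subset G$ with $\sum_{g\in H}x_g=x$; $\Sigma_K=\{x:|\text{group support}(x)|\le K\}$; group norm $\|x\|_{\mathcal{A}}=\sum_{g\in G}\|x_g\|$ if $x\in\mathrm{span}\{e_i:i\in\bigcup_gg\}$, $+\infty$ otherwise. RIP on $\Sigma-\Sigma$ with constant $\delta$: $(1-\delta)\|x\|^2\le\|Mx\|_{\mathcal{F}}^2\le(1+\delta)\|x\|^2$ for all $x\in\Sigma-\Sigma$. $\|\cdot\|_\Sigma$ is the atomic norm with atoms $\Sigma\cap S(1)$: $\|x\|_\Sigma=\inf\{t\ge0:x\in t\cdot\overline{\mathrm{conv}}(\Sigma\cap S(1))\}$ ($+\infty$ if none), $S(1)$ the unit sphere of $\mathcal{H}$. *)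

theory Defs
  imports "HOL-Analysis.Analysis"
begin

text \<open>The whole product space H = E_1 x ... x E_J is modelled as real^'i, where the
finite type 'i is the disjoint union of the basis indices of all E_j, and
blk :: 'i => 'j assigns each basis index to its component (J = CARD('j)).
The orthonormal basis of E_j is the family of standard basis vectors axis i 1
with blk i = j.\<close>

definition gpart :: "'i set \<Rightarrow> real^'i \<Rightarrow> real^'i" where
  "gpart g x = (\<chi> i. if i \<in> g then x $ i else 0)"

definition blockpart :: "('i \<Rightarrow> 'j) \<Rightarrow> 'j \<Rightarrow> real^'i \<Rightarrow> real^'i" where
  "blockpart blk j x = (\<chi> i. if blk i = j then x $ i else 0)"

definition is_group_support :: "'i set set \<Rightarrow> real^'i \<Rightarrow> 'i set set \<Rightarrow> bool" where
  "is_group_support G x H \<longleftrightarrow>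
     H \<subseteq> G \<and> (\<Sum>g\<in>H. gpart g x) = x \<and>
     (\<forall>H'. H' \<subseteq> G \<and> (\<Sum>g\<in>H'. gpart g x) = x \<longrightarrow> H \<subseteq> H')"

definition group_sparse :: "'i set set \<Rightarrow> nat \<Rightarrow> (real^'i) set" where
  "group_sparse G K = {x. \<exists>H. is_group_support G x H \<and> card H \<le> K}"

definition group_norm :: "'i set set \<Rightarrow> real^'i \<Rightarrow> ereal" where
  "group_norm G x =
     (if x \<in> span {axis i (1::real) | i. i \<in> \<Union>G}
      then ereal (\<Sum>g\<in>G. norm (gpart g x)) else \<infinity>)"

definition atomic_norm :: "('a::real_normed_vector) set \<Rightarrow> 'a \<Rightarrow> ereal" where
  "atomic_norm S x =
     Inf {ereal t | t. t \<ge> 0 \<and> x \<in> (\<lambda>v. t *\<^sub>R v) ` closure (convex hull (S \<inter> sphere 0 1))}"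

definition prod_model :: "('i \<Rightarrow> 'j) \<Rightarrow> ('j \<Rightarrow> 'i set set) \<Rightarrow> ('j \<Rightarrow> nat) \<Rightarrow> (real^'i) set" where
  "prod_model blk G K = {x. \<forall>j. blockpart blk j x \<in> group_sparse (G j) (K j)}"

definition objective :: "('i \<Rightarrow> 'j::finite) \<Rightarrow> ('j \<Rightarrow> 'i set set) \<Rightarrow> ('j \<Rightarrow> nat) \<Rightarrow> real^'i \<Rightarrow> ereal" where
  "objective blk G K x =
     (\<Sum>j\<in>UNIV. ereal (1 / sqrt (real (K j))) * group_norm (G j) (blockpart blk j x))"

definition RIP :: "(real^'i \<Rightarrow> 'f::real_normed_vector) \<Rightarrow> (real^'i) set \<Rightarrow> real \<Rightarrow> bool" where
  "RIP M S \<delta> \<longleftrightarrow> (\<forall>x\<in>S. (1 - \<delta>) * (norm x)\<^sup>2 \<le> (norm (M x))\<^sup>2 \<and>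
                            (norm (M x))\<^sup>2 \<le> (1 + \<delta>) * (norm x)\<^sup>2)"

end

theory Submission
  imports Defs
begin

text \<open>Write \<open>z = xs - x0\<close> and let \<open>h\<close> keep, in every block \<open>j\<close>, the \<open>K j\<close> groups of \<open>z\<close>
  of largest norm; put \<open>w = z - h\<close>. Since \<open>x0\<close> is feasible, minimality of \<open>xs\<close> yields a cone
  condition: the group norms of \<open>w\<close>, weighted by \<open>1 / sqrt (K j)\<close>, are dominated by those of \<open>h\<close>.
  Testing \<open>w\<close> against arbitrary \<open>y\<close> and the \<open>K j\<close> largest groups of \<open>y\<close> then shows
  \<open>w \<in> D \<parallel>h\<parallel> \<cdot> conv (\<Sigma> \<inter> S(1))\<close>, with \<open>D = 1\<close> for one block and \<open>D = sqrt (1 + J)\<close>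
  otherwise, while \<open>h \<in> \<Sigma>\<close> is orthogonal to \<open>w\<close>. The RIP, applied to \<open>h\<close> and each atom
  and extended to the closed convex hull by linearity, gives
  \<open>\<parallel>h\<parallel>\<^sup>2 (1 - \<delta> sqrt (1 + D\<^sup>2)) \<le> \<langle>M h, M z\<rangle> \<le> sqrt (1 + \<delta>) \<parallel>h\<parallel> (\<eta> + \<epsilon>)\<close>, and
  \<open>\<parallel>z\<parallel>\<^sub>\<Sigma> \<le> (1 + D) \<parallel>h\<parallel>\<close>.\<close>

section \<open>Atomic norms of cones under the restricted isometry property\<close>

lemma norm_scaleR_add_square:
  fixes a b :: "'a::real_inner"
  shows "(norm (c *\<^sub>R a + b))\<^sup>2 = c\<^sup>2 * (norm a)\<^sup>2 + 2 * c * (a \<bullet> b) + (norm b)\<^sup>2"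
  unfolding power2_norm_eq_inner by (simp add: inner_add inner_commute algebra_simps power2_eq_square)

lemma norm_scaleR_diff_square:
  fixes a b :: "'a::real_inner"
  shows "(norm (c *\<^sub>R a - b))\<^sup>2 = c\<^sup>2 * (norm a)\<^sup>2 - 2 * c * (a \<bullet> b) + (norm b)\<^sup>2"
  unfolding power2_norm_eq_inner by (simp add: inner_diff inner_commute algebra_simps power2_eq_square)

lemma RIP_nonneg:
  assumes "RIP M D \<delta>" "x \<in> D" "x \<noteq> 0"
  shows "0 \<le> \<delta>"
proof -
  have "(1 - \<delta>) * (norm x)\<^sup>2 \<le> (1 + \<delta>) * (norm x)\<^sup>2"
    using assms(1,2) unfolding RIP_def by (meson order_trans)
  then show ?thesis using assms(3) by simp
qed

lemma RIP_inner_le: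
  fixes M :: "real^'i::finite \<Rightarrow> 'f::real_inner"
  assumes rip: "RIP M D \<delta>" and lin: "linear M"
    and plus: "\<gamma> *\<^sub>R p + q \<in> D" and minus: "\<gamma> *\<^sub>R p - q \<in> D"
  shows "4 * \<gamma> * (M p \<bullet> M q) \<le> 4 * \<gamma> * (p \<bullet> q) + 2 * \<delta> * (\<gamma>\<^sup>2 * (norm p)\<^sup>2 + (norm q)\<^sup>2)"
proof -
  have "(norm (M (\<gamma> *\<^sub>R p + q)))\<^sup>2 = \<gamma>\<^sup>2 * (norm (M p))\<^sup>2 + 2 * \<gamma> * (M p \<bullet> M q) + (norm (M q))\<^sup>2"
    using lin by (simp add: linear_add linear_scale norm_scaleR_add_square)
  moreover have "(norm (M (\<gamma> *\<^sub>R p - q)))\<^sup>2 = \<gamma>\<^sup>2 * (norm (M p))\<^sup>2 - 2 * \<gamma> * (M p \<bullet> M q) + (norm (M q))\<^sup>2"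
    using lin by (simp add: linear_diff linear_scale norm_scaleR_diff_square)
  moreover have "(norm (M (\<gamma> *\<^sub>R p + q)))\<^sup>2 \<le> (1 + \<delta>) * (norm (\<gamma> *\<^sub>R p + q))\<^sup>2"
    and "(1 - \<delta>) * (norm (\<gamma> *\<^sub>R p - q))\<^sup>2 \<le> (norm (M (\<gamma> *\<^sub>R p - q)))\<^sup>2"
    using rip plus minus by (auto simp: RIP_def)
  ultimately show ?thesis
    unfolding norm_scaleR_add_square norm_scaleR_diff_square by (simp add: algebra_simps)
qed

lemma linear_le_on_closure_convex_hull:
  fixes f :: "'a::real_normed_vector \<Rightarrow> real"
  assumes lin: "linear f" and cont: "continuous_on UNIV f"
    and le: "\<And>c. c \<in> A \<Longrightarrow> f c \<le> k" and c: "c \<in> closure (convex hull A)"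
  shows "f c \<le> k"
proof -
  have "convex {c. f c \<le> k}"
  proof (rule convexI)
    fix x y and u v :: real assume "x \<in> {c. f c \<le> k}" "y \<in> {c. f c \<le> k}" "0 \<le> u" "0 \<le> v" "u + v = 1"
    then have "u * f x + v * f y \<le> u * k + v * k"
      by (intro add_mono mult_left_mono) auto
    then show "u *\<^sub>R x + v *\<^sub>R y \<in> {c. f c \<le> k}"
      using lin \<open>u + v = 1\<close> by (simp add: linear_add linear_scale distrib_right[symmetric])
  qed
  moreover have "closed {c. f c \<le> k}"
    using cont by (intro closed_Collect_le) auto
  ultimately have "closure (convex hull A) \<subseteq> {c. f c \<le> k}"
    using le by (intro closure_minimal hull_minimal) auto
  then show ?thesis using c by blast
qed

lemma scaled_mem_closed_convex_if_inner_le: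
  fixes w :: "'a::{real_inner, heine_borel}"
  assumes convC: "convex C" and closC: "closed C" and L: "L \<ge> 0"
    and bound: "\<And>y. \<exists>c\<in>C. y \<bullet> w \<le> L * (y \<bullet> c)"
  shows "\<exists>c\<in>C. w = L *\<^sub>R c"
proof (cases "L = 0")
  case True
  obtain c where "c \<in> C" "w \<bullet> w \<le> L * (w \<bullet> c)" using bound by blast
  moreover have "w = 0"
    using calculation True by (metis inner_eq_zero_iff inner_ge_zero mult_zero_left order_antisym)
  ultimately show ?thesis using True by auto
next
  case False
  then have Lp: "L > 0" using L by simp
  show ?thesis
  proof (rule ccontr)
    assume "\<not> ?thesis"
    then have "(1 / L) *\<^sub>R w \<notin> C" using Lp by force
    then obtain a b where ab: "a \<bullet> ((1 / L) *\<^sub>R w) < b" "\<forall>x\<in>C. b < a \<bullet> x"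
      using separating_hyperplane_closed_point[OF convC closC] by blast
    obtain c where c: "c \<in> C" "(- a) \<bullet> w \<le> L * ((- a) \<bullet> c)" using bound by blast
    have "a \<bullet> c \<le> (a \<bullet> w) / L" using c(2) Lp by (simp add: pos_le_divide_eq mult.commute)
    then show False using ab c(1) by fastforce
  qed
qed

lemma norm_le_atomic_norm: "ereal (norm x) \<le> atomic_norm S x"
  unfolding atomic_norm_def
proof (rule Inf_greatest)
  have "closure (convex hull (S \<inter> sphere 0 1)) \<subseteq> cball 0 1"
    by (intro closure_minimal hull_minimal) auto
  then show "ereal (norm x) \<le> r"
    if "r \<in> {ereal t |t. t \<ge> 0 \<and> x \<in> (\<lambda>v. t *\<^sub>R v) ` closure (convex hull (S \<inter> sphere 0 1))}" for r
    using that by (force intro: mult_left_le)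
qed

lemma atomic_norm_scaleR_le:
  assumes "t \<ge> 0" "c \<in> closure (convex hull (S \<inter> sphere 0 1))"
  shows "atomic_norm S (t *\<^sub>R c) \<le> ereal t"
  unfolding atomic_norm_def using assms by (intro Inf_lower) auto

lemma atomic_norm_add_le:
  assumes cone: "\<And>a x. x \<in> S \<Longrightarrow> a *\<^sub>R x \<in> S"
    and h: "h \<in> S" and c: "c \<in> closure (convex hull (S \<inter> sphere 0 1))" and L: "L \<ge> 0"
  shows "atomic_norm S (h + L *\<^sub>R c) \<le> ereal (norm h + L)"
proof (cases "h = 0")
  case True
  then show ?thesis using atomic_norm_scaleR_le[OF L c] by simp
next
  case False
  let ?C = "closure (convex hull (S \<inter> sphere 0 1))"
  define s where "s = norm h"
  have s: "s > 0" using False by (simp add: s_def)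
  have "(1 / s) *\<^sub>R h \<in> ?C"
    using cone[OF h] s closure_subset hull_subset by (fastforce simp: s_def)
  then have "(s / (s + L)) *\<^sub>R ((1 / s) *\<^sub>R h) + (L / (s + L)) *\<^sub>R c \<in> ?C"
    using c s L by (intro convexD convex_closure convex_convex_hull) (auto simp: add_divide_distrib[symmetric])
  moreover have "h + L *\<^sub>R c = (s + L) *\<^sub>R ((s / (s + L)) *\<^sub>R ((1 / s) *\<^sub>R h) + (L / (s + L)) *\<^sub>R c)"
    using s L by (simp add: scaleR_add_right)
  ultimately show ?thesis
    using atomic_norm_scaleR_le[of "s + L"] s L by (simp add: s_def)
qed

text \<open>For every atom \<open>c\<close>, the polarized RIP bound with \<open>p = -h\<close>, \<open>q = L c + h\<close> is affine in \<open>c\<close>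
  (here \<open>\<parallel>c\<parallel> = 1\<close> is used), so it persists on the closed convex hull of the atoms.\<close>
lemma RIP_cone_inner_ge:
  fixes M :: "real^'i::finite \<Rightarrow> 'f::real_inner"
  assumes lin: "linear M" and rip: "RIP M {a - b | a b. a \<in> S \<and> b \<in> S} \<delta>"
    and cone: "\<And>a x. x \<in> S \<Longrightarrow> a *\<^sub>R x \<in> S"
    and h: "h \<in> S" and c0: "c0 \<in> closure (convex hull (S \<inter> sphere 0 1))"
    and orth: "h \<bullet> (L *\<^sub>R c0) = 0"
    and R: "R > 0" "L\<^sup>2 + (norm h)\<^sup>2 = R\<^sup>2 * (norm h)\<^sup>2"
  shows "(norm h)\<^sup>2 * (1 - \<delta> * R) \<le> M h \<bullet> M (h + L *\<^sub>R c0)"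
proof -
  define f where "f c = (4 * R - 4 * \<delta>) * (h \<bullet> (L *\<^sub>R c)) - 4 * R * (M h \<bullet> (L *\<^sub>R M c))" for c
  define k where "k = 4 * R * (M h \<bullet> M h - (norm h)\<^sup>2) + 2 * \<delta> * (R\<^sup>2 * (norm h)\<^sup>2 + (L\<^sup>2 + (norm h)\<^sup>2))"
  have atoms: "f c \<le> k" if c: "c \<in> S \<inter> sphere 0 1" for c
  proof -
    have "R *\<^sub>R (- h) + (L *\<^sub>R c + h) = (1 - R) *\<^sub>R h - (- L) *\<^sub>R c"
      and "R *\<^sub>R (- h) - (L *\<^sub>R c + h) = (- (R + 1)) *\<^sub>R h - L *\<^sub>R c"
      by (simp_all add: algebra_simps)
    then have "R *\<^sub>R (- h) + (L *\<^sub>R c + h) \<in> {a - b | a b. a \<in> S \<and> b \<in> S}"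
      and "R *\<^sub>R (- h) - (L *\<^sub>R c + h) \<in> {a - b | a b. a \<in> S \<and> b \<in> S}"
      using cone h c by fastforce+
    from RIP_inner_le[OF rip lin this]
    have "4 * R * (M (- h) \<bullet> M (L *\<^sub>R c + h))
        \<le> 4 * R * ((- h) \<bullet> (L *\<^sub>R c + h)) + 2 * \<delta> * (R\<^sup>2 * (norm (- h))\<^sup>2 + (norm (L *\<^sub>R c + h))\<^sup>2)" .
    moreover have "(norm (L *\<^sub>R c + h))\<^sup>2 = L\<^sup>2 + 2 * L * (h \<bullet> c) + (norm h)\<^sup>2"
      using c by (simp add: norm_scaleR_add_square inner_commute)
    moreover have "M (L *\<^sub>R c + h) = L *\<^sub>R M c + M h" "M (L *\<^sub>R c) = L *\<^sub>R M c" "M (- h) = - M h"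
      using lin by (simp_all add: linear_add linear_scale linear_neg)
    moreover have "h \<bullet> h = (norm h)\<^sup>2" by (simp add: power2_norm_eq_inner)
    ultimately show ?thesis
      by (simp add: f_def k_def linear_scale inner_add_right inner_commute algebra_simps)
  qed
  have "linear f"
    using lin by (intro linearI) (simp_all add: f_def linear_add linear_scale inner_add_right algebra_simps)
  moreover have "continuous_on UNIV M"
    using lin by (intro linear_continuous_on) (simp add: linear_conv_bounded_linear[symmetric])
  then have "continuous_on UNIV f"
    unfolding f_def by (intro continuous_intros)
  ultimately have "f c0 \<le> k"
    using atoms c0 by (rule linear_le_on_closure_convex_hull)
  then have "- (4 * R * (M h \<bullet> (L *\<^sub>R M c0))) \<le> k"
    unfolding f_def orth by simp
  then have "4 * R * ((norm h)\<^sup>2 * (1 - \<delta> * R)) \<le> 4 * R * (M h \<bullet> M (h + L *\<^sub>R c0))"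
    using lin unfolding k_def R(2)
    by (simp add: linear_add linear_scale inner_add_right power2_eq_square algebra_simps)
  then show ?thesis using R(1) by simp
qed

lemma RIP_norm_le_measurement:
  fixes M :: "real^'i::finite \<Rightarrow> 'f::real_inner"
  assumes lin: "linear M" and rip: "RIP M {a - b | a b. a \<in> S \<and> b \<in> S} \<delta>" and \<delta>: "0 \<le> \<delta>"
    and cone: "\<And>a x. x \<in> S \<Longrightarrow> a *\<^sub>R x \<in> S"
    and h: "h \<in> S" and c0: "c0 \<in> closure (convex hull (S \<inter> sphere 0 1))"
    and w: "w = (D * norm h) *\<^sub>R c0" and orth: "h \<bullet> w = 0"
  shows "norm h * (1 - \<delta> * sqrt (1 + D\<^sup>2)) \<le> sqrt (1 + \<delta>) * norm (M (h + w))"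
proof -
  define s where "s = norm h"
  have R: "sqrt (1 + D\<^sup>2) > 0" "(D * norm h)\<^sup>2 + (norm h)\<^sup>2 = (sqrt (1 + D\<^sup>2))\<^sup>2 * (norm h)\<^sup>2"
    by (auto simp: algebra_simps power_mult_distrib add_pos_nonneg)
  have "s * (s * (1 - \<delta> * sqrt (1 + D\<^sup>2))) \<le> M h \<bullet> M (h + w)"
    using RIP_cone_inner_ge[OF lin rip cone h c0 _ R] orth w by (simp add: s_def power2_eq_square)
  also have "\<dots> \<le> norm (M h) * norm (M (h + w))" by (rule norm_cauchy_schwarz)
  also have "\<dots> \<le> s * (sqrt (1 + \<delta>) * norm (M (h + w)))"
  proof -
    have "h - 0 \<in> {a - b | a b. a \<in> S \<and> b \<in> S}" using h cone[OF h, of 0] by force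
    then have "(norm (M h))\<^sup>2 \<le> (1 + \<delta>) * s\<^sup>2" using rip by (auto simp: RIP_def s_def)
    then have "norm (M h) \<le> sqrt (1 + \<delta>) * s"
      by (metis real_le_rsqrt real_sqrt_mult real_sqrt_abs abs_of_nonneg norm_ge_zero s_def)
    then have "norm (M h) * norm (M (h + w)) \<le> (sqrt (1 + \<delta>) * s) * norm (M (h + w))"
      by (rule mult_right_mono) simp
    then show ?thesis by (simp add: algebra_simps)
  qed
  finally have "s * (s * (1 - \<delta> * sqrt (1 + D\<^sup>2))) \<le> s * (sqrt (1 + \<delta>) * norm (M (h + w)))" .
  then show ?thesis
    using \<delta> by (cases "s = 0") (auto simp: s_def)
qed

lemma atomic_norm_error_le:
  fixes M :: "real^'i::finite \<Rightarrow> 'f::real_inner"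
  assumes lin: "linear M" and rip: "RIP M {a - b | a b. a \<in> S \<and> b \<in> S} \<delta>" and \<delta>: "0 \<le> \<delta>"
    and cone: "\<And>a x. x \<in> S \<Longrightarrow> a *\<^sub>R x \<in> S"
    and h: "h \<in> S" and c0: "c0 \<in> closure (convex hull (S \<inter> sphere 0 1))"
    and w: "w = (D * norm h) *\<^sub>R c0" and orth: "h \<bullet> w = 0" and D: "D \<ge> 0"
    and small: "\<delta> * sqrt (1 + D\<^sup>2) < 1" and meas: "norm (M (h + w)) \<le> \<xi>"
  shows "atomic_norm S (h + w) \<le> ereal ((1 + D) * sqrt (1 + \<delta>) * \<xi> / (1 - \<delta> * sqrt (1 + D\<^sup>2)))"
proof -
  have "sqrt (1 + \<delta>) * norm (M (h + w)) \<le> sqrt (1 + \<delta>) * \<xi>"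
    using meas \<delta> by (intro mult_left_mono) auto
  then have "norm h * (1 - \<delta> * sqrt (1 + D\<^sup>2)) \<le> sqrt (1 + \<delta>) * \<xi>"
    using RIP_norm_le_measurement[OF lin rip \<delta> cone h c0 w orth] by linarith
  then have "(1 + D) * norm h \<le> (1 + D) * sqrt (1 + \<delta>) * \<xi> / (1 - \<delta> * sqrt (1 + D\<^sup>2))"
    using small D by (simp add: pos_le_divide_eq mult_left_mono mult.assoc)
  moreover have "atomic_norm S (h + w) \<le> ereal (norm h + D * norm h)"
    using atomic_norm_add_le[OF cone h c0] w D by simp
  ultimately show ?thesis
    by (metis order_trans ereal_less_eq(3) distrib_right mult_1)
qed

section \<open>Largest entries and Cauchy--Schwarz bounds\<close>

lemma exists_max_sum_subset:
  fixes f :: "'a \<Rightarrow> real"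
  assumes fin: "finite X" and n: "n \<le> card X" and pos: "\<And>x. f x \<ge> 0"
  shows "\<exists>T\<subseteq>X. card T = n \<and> (\<forall>H\<subseteq>X. card H \<le> n \<longrightarrow> sum f H \<le> sum f T)
            \<and> (\<forall>g\<in>X - T. \<forall>g'\<in>T. f g \<le> f g')"
proof -
  define F where "F = {T. T \<subseteq> X \<and> card T = n}"
  have finF: "finite F" using fin by (simp add: F_def)
  moreover have "F \<noteq> {}" using obtain_subset_with_card_n[OF n] by (auto simp: F_def)
  ultimately have "Max (sum f ` F) \<in> sum f ` F" by simp
  then obtain T where TF: "T \<in> F" and T: "sum f T = Max (sum f ` F)" by auto
  have maxT: "\<And>T'. T' \<in> F \<Longrightarrow> sum f T' \<le> sum f T"
    unfolding T using finF by simp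
  have TX: "T \<subseteq> X" and cT: "card T = n" using TF by (auto simp: F_def)
  have finT: "finite T" using TX fin finite_subset by blast
  have exch: "\<forall>g\<in>X - T. \<forall>g'\<in>T. f g \<le> f g'"
  proof (intro ballI, rule ccontr)
    fix g g' assume g: "g \<in> X - T" and g': "g' \<in> T" and lt: "\<not> f g \<le> f g'"
    have "card T > 0" using g' finT by (auto simp: card_gt_0_iff)
    then have "insert g (T - {g'}) \<in> F"
      using g g' TX cT finT by (auto simp: F_def card_insert_if)
    moreover have "sum f (insert g (T - {g'})) = sum f T - f g' + f g"
      using g g' finT by (simp add: sum.insert_if sum_diff1)
    ultimately show False using maxT lt by fastforce
  qed
  have "sum f H \<le> sum f T" if H: "H \<subseteq> X" "card H \<le> n" for H
  proof -
    have finH: "finite H" using H fin finite_subset by blast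
    have "n - card H \<le> card (X - H)" using H n fin by (simp add: card_Diff_subset finH)
    then obtain E where E: "E \<subseteq> X - H" "card E = n - card H" "finite E"
      using obtain_subset_with_card_n by metis
    moreover have "H \<inter> E = {}" using E by blast
    ultimately have "H \<union> E \<in> F"
      using H finH by (auto simp: F_def card_Un_disjoint)
    then have "sum f (H \<union> E) \<le> sum f T" by (rule maxT)
    moreover have "sum f H \<le> sum f (H \<union> E)"
      using E finH pos by (intro sum_mono2) auto
    ultimately show ?thesis by simp
  qed
  then show ?thesis using TX cT exch by blast
qed

lemma sum_le_sqrt_card_mult_L2_set:
  fixes b :: "'a \<Rightarrow> real"
  assumes "\<And>g. g \<in> S \<Longrightarrow> b g \<ge> 0"
  shows "sum b S \<le> sqrt (card S) * L2_set b S"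
proof -
  have "(\<Sum>g\<in>S. \<bar>1::real\<bar> * \<bar>b g\<bar>) \<le> L2_set (\<lambda>_. 1) S * L2_set b S"
    by (rule L2_set_mult_ineq)
  moreover have "(\<Sum>g\<in>S. \<bar>1::real\<bar> * \<bar>b g\<bar>) = sum b S" using assms by (intro sum.cong) auto
  ultimately show ?thesis by (simp add: L2_set_constant)
qed

text \<open>The hypotheses on \<open>c\<close> say that \<open>c / \<alpha>\<close> lies in the convex hull of indicators of sets
  with at most \<open>K\<close> elements, on which \<open>sum b\<close> is maximal at \<open>S\<close>; directly, one compares
  \<open>b\<close> with its smallest value \<open>\<tau>\<close> on \<open>S\<close>.\<close>
lemma sum_mult_le_sum_top:
  fixes b c :: "'a \<Rightarrow> real" and K :: nat
  assumes fin: "finite G" and K: "K \<ge> 1"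
    and b: "\<And>g. g \<in> G \<Longrightarrow> b g \<ge> 0"
    and c: "\<And>g. g \<in> G \<Longrightarrow> 0 \<le> c g \<and> c g \<le> \<alpha>"
    and csum: "sum c G \<le> \<alpha> * K"
    and S: "S \<subseteq> G" "card S = min K (card G)"
    and top: "\<And>g g'. g \<in> G - S \<Longrightarrow> g' \<in> S \<Longrightarrow> b g \<le> b g'"
  shows "(\<Sum>g\<in>G. c g * b g) \<le> \<alpha> * sum b S"
proof (cases "card G \<le> K")
  case True
  then have "S = G" using S fin by (simp add: card_subset_eq)
  have "(\<Sum>g\<in>G. c g * b g) \<le> (\<Sum>g\<in>G. \<alpha> * b g)"
    using c b by (intro sum_mono mult_right_mono) auto
  then show ?thesis using \<open>S = G\<close> by (simp add: sum_distrib_left)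
next
  case False
  then have cS: "card S = K" using S by simp
  have finS: "finite S" using S fin finite_subset by blast
  then have "S \<noteq> {}" using cS K by auto
  define \<tau> where "\<tau> = Min (b ` S)"
  have tau_le: "\<And>g. g \<in> S \<Longrightarrow> \<tau> \<le> b g" using finS by (simp add: \<tau>_def)
  have "\<tau> \<in> b ` S" using finS \<open>S \<noteq> {}\<close> by (simp add: \<tau>_def)
  then have tau0: "\<tau> \<ge> 0" and ge_tau: "\<And>g. g \<in> G - S \<Longrightarrow> b g \<le> \<tau>"
    using b S top by auto
  have "(\<Sum>g\<in>G. c g * b g) = (\<Sum>g\<in>S. c g * b g) + (\<Sum>g\<in>G - S. c g * b g)"
    using S fin by (simp add: sum.subset_diff)
  also have "(\<Sum>g\<in>G - S. c g * b g) \<le> (\<Sum>g\<in>G - S. c g * \<tau>)"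
    using c ge_tau by (intro sum_mono mult_left_mono) auto
  also have "\<dots> = \<tau> * sum c (G - S)" by (simp add: sum_distrib_left mult.commute)
  also have "\<dots> \<le> \<tau> * (\<alpha> * K - sum c S)"
    using csum tau0 S fin by (intro mult_left_mono) (auto simp: sum.subset_diff)
  also have "(\<Sum>g\<in>S. c g * b g) + \<tau> * (\<alpha> * K - sum c S) = (\<Sum>g\<in>S. c g * (b g - \<tau>)) + \<alpha> * K * \<tau>"
    by (simp add: algebra_simps sum_subtractf sum_distrib_left sum_distrib_right)
  also have "(\<Sum>g\<in>S. c g * (b g - \<tau>)) \<le> (\<Sum>g\<in>S. \<alpha> * (b g - \<tau>))"
    using c S tau_le by (intro sum_mono mult_right_mono) auto
  also have "(\<Sum>g\<in>S. \<alpha> * (b g - \<tau>)) = \<alpha> * (sum b S - K * \<tau>)"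
    by (simp only: sum_distrib_left[symmetric] sum_subtractf) (simp add: cS)
  finally show ?thesis by (simp add: algebra_simps)
qed

lemma sum_mult_le_L2_set_top:
  fixes b c :: "'a \<Rightarrow> real" and K :: nat
  assumes fin: "finite G" and K: "K \<ge> 1" and m: "m \<ge> 0"
    and b: "\<And>g. g \<in> G \<Longrightarrow> b g \<ge> 0"
    and c: "\<And>g. g \<in> G \<Longrightarrow> 0 \<le> c g \<and> c g \<le> m / sqrt K"
    and csum: "sum c G \<le> m * sqrt K"
    and S: "S \<subseteq> G" "card S = min K (card G)"
    and top: "\<And>g g'. g \<in> G - S \<Longrightarrow> g' \<in> S \<Longrightarrow> b g \<le> b g'"
  shows "(\<Sum>g\<in>G. c g * b g) \<le> m * L2_set b S"
proof -
  have sK: "sqrt K > 0" using K by simp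
  have "m * sqrt K = (m / sqrt K) * K" using K by (simp add: field_simps)
  then have "sum c G \<le> (m / sqrt K) * K" using csum by simp
  from sum_mult_le_sum_top[OF fin K b c this S top]
  have "(\<Sum>g\<in>G. c g * b g) \<le> (m / sqrt K) * sum b S" .
  also have "\<dots> \<le> (m / sqrt K) * (sqrt K * L2_set b S)"
  proof (rule mult_left_mono)
    have "sum b S \<le> sqrt (card S) * L2_set b S"
      using b S by (intro sum_le_sqrt_card_mult_L2_set) auto
    also have "\<dots> \<le> sqrt K * L2_set b S"
      using S(2) by (intro mult_right_mono) auto
    finally show "sum b S \<le> sqrt K * L2_set b S" .
  qed (use m sK in simp)
  finally show ?thesis using sK by simp
qed

definition tail_factor :: "nat \<Rightarrow> real" where
  "tail_factor J = (if J = 1 then 1 else sqrt (1 + real J))"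

lemma tail_factor_pos: "tail_factor J > 0"
  by (simp add: tail_factor_def add_pos_nonneg)

lemma L2_set_max_le:
  fixes t A :: "'a \<Rightarrow> real"
  assumes fin: "finite I" and nonneg: "\<And>i. i \<in> I \<Longrightarrow> 0 \<le> t i \<and> 0 \<le> A i"
    and sum: "sum A I \<le> sum t I"
  shows "L2_set (\<lambda>i. max (t i) (A i)) I \<le> tail_factor (card I) * L2_set t I"
proof (cases "card I = 1")
  case True
  then obtain i where "I = {i}" by (rule card_1_singletonE)
  then show ?thesis using sum by (simp add: tail_factor_def max_absorb1)
next
  case False
  have "L2_set A I \<le> sum A I" using nonneg by (intro L2_set_le_sum) auto
  also have "\<dots> \<le> sum t I" by (fact sum)
  also have "\<dots> \<le> sqrt (card I) * L2_set t I"
    using nonneg by (intro sum_le_sqrt_card_mult_L2_set) auto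
  finally have A: "(L2_set A I)\<^sup>2 \<le> card I * (L2_set t I)\<^sup>2"
    by (metis L2_set_nonneg power_mono power_mult_distrib of_nat_0_le_iff real_sqrt_pow2)
  have "(L2_set (\<lambda>i. max (t i) (A i)) I)\<^sup>2 \<le> (L2_set t I)\<^sup>2 + (L2_set A I)\<^sup>2"
    using nonneg by (auto simp: L2_set_def sum_nonneg sum.distrib[symmetric] max_def intro!: sum_mono)
  also have "\<dots> \<le> (tail_factor (card I) * L2_set t I)\<^sup>2"
    using A False by (simp add: tail_factor_def power_mult_distrib algebra_simps)
  finally show ?thesis
    by (rule power2_le_imp_le) (simp add: tail_factor_def)
qed

section \<open>Group-sparse models\<close>

lemma gpart_nth [simp]: "gpart g x $ i = (if i \<in> g then x $ i else 0)"
  by (simp add: gpart_def)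

lemma blockpart_nth [simp]: "blockpart blk j x $ i = (if blk i = j then x $ i else 0)"
  by (simp add: blockpart_def)

lemma gpart_diff: "gpart g (x - y) = gpart g x - gpart g y"
  by (simp add: vec_eq_iff)

lemma inner_gpart: "gpart g y \<bullet> gpart g z = (\<Sum>i\<in>g. y $ i * z $ i)"
  for g :: "'i::finite set"
  by (simp add: inner_vec_def if_distrib[of "\<lambda>t. t * _"] sum.If_cases Int_def cong: if_cong)

lemma sum_gpart_nth:
  fixes H :: "'i::finite set set"
  assumes "pairwise disjnt H"
  shows "(\<Sum>g\<in>H. gpart g v) $ i = (if i \<in> \<Union>H then v $ i else 0)"
proof (cases "i \<in> \<Union>H")
  case True
  then obtain g0 where g0: "g0 \<in> H" "i \<in> g0" by auto
  have "(\<Sum>g\<in>H. gpart g v) $ i = (\<Sum>g\<in>H. if g = g0 then v $ i else 0)"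
    unfolding sum_component
    using assms g0 by (intro sum.cong) (auto simp: pairwise_def disjnt_def)
  also have "\<dots> = v $ i" using g0 finite_subset[of H UNIV] by simp
  finally show ?thesis using True by simp
qed (auto simp: sum_component intro!: sum.neutral)

lemma group_sparse_iff:
  fixes G :: "'i::finite set set"
  assumes disj: "pairwise disjnt G"
  shows "x \<in> group_sparse G K \<longleftrightarrow> (\<exists>H\<subseteq>G. card H \<le> K \<and> (\<forall>i. x $ i \<noteq> 0 \<longrightarrow> i \<in> \<Union>H))"
proof
  assume "x \<in> group_sparse G K"
  then obtain H where H: "H \<subseteq> G" "(\<Sum>g\<in>H. gpart g x) = x" "card H \<le> K"
    by (auto simp: group_sparse_def is_group_support_def)
  moreover have "pairwise disjnt H" using disj H(1) pairwise_subset by blast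
  ultimately show "\<exists>H\<subseteq>G. card H \<le> K \<and> (\<forall>i. x $ i \<noteq> 0 \<longrightarrow> i \<in> \<Union>H)"
    by (metis sum_gpart_nth)
next
  assume "\<exists>H\<subseteq>G. card H \<le> K \<and> (\<forall>i. x $ i \<noteq> 0 \<longrightarrow> i \<in> \<Union>H)"
  then obtain H where HG: "H \<subseteq> G" and cH: "card H \<le> K" and supp: "\<forall>i. x $ i \<noteq> 0 \<longrightarrow> i \<in> \<Union>H"
    by blast
  define H0 where "H0 = {g\<in>H. \<exists>i\<in>g. x $ i \<noteq> 0}"
  have H0G: "H0 \<subseteq> G" using HG by (auto simp: H0_def)
  have "card H0 \<le> K"
    using cH card_mono[of H H0] finite_subset[of H UNIV] by (auto simp: H0_def)
  moreover have "(\<Sum>g\<in>H0. gpart g x) = x"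
  proof (rule vec_eq_iff[THEN iffD2], rule allI)
    fix i
    show "(\<Sum>g\<in>H0. gpart g x) $ i = x $ i"
      unfolding sum_gpart_nth[OF pairwise_subset[OF disj H0G]] using supp by (auto simp: H0_def)
  qed
  moreover have "H0 \<subseteq> H'" if H': "H' \<subseteq> G" "(\<Sum>g\<in>H'. gpart g x) = x" for H'
  proof
    fix g assume "g \<in> H0"
    then obtain i where i: "g \<in> G" "i \<in> g" "x $ i \<noteq> 0" using H0G by (auto simp: H0_def)
    then have "(\<Sum>g\<in>H'. gpart g x) $ i \<noteq> 0" using H' by simp
    then obtain g' where g': "g' \<in> H'" "i \<in> g'"
      using sum_gpart_nth[OF pairwise_subset[OF disj H'(1)]] by (auto split: if_splits)
    then have "g' \<in> G" using H'(1) by blast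
    then have "g = g'" using disj i g'(2) unfolding pairwise_def disjnt_def by blast
    then show "g \<in> H'" using g'(1) by simp
  qed
  ultimately show "x \<in> group_sparse G K"
    using H0G by (auto simp: group_sparse_def is_group_support_def)
qed

lemma in_span_axis_if_zero_outside:
  assumes "\<And>i. i \<notin> U \<Longrightarrow> v $ i = 0"
  shows "v \<in> span {axis i (1::real) | i. i \<in> U}"
proof -
  have "v = (\<Sum>i\<in>U. v $ i *\<^sub>R axis i 1)"
    using assms by (auto simp: vec_eq_iff sum_component axis_def if_distrib[of "\<lambda>t. _ * t"] cong: if_cong)
  also have "\<dots> \<in> span {axis i (1::real) | i. i \<in> U}"
    by (intro span_sum span_mul span_base) auto
  finally show ?thesis .
qed

lemma nth_eq_zero_if_in_span_axis:
  assumes "v \<in> span {axis i (1::real) | i. i \<in> U}" "k \<notin> U"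
  shows "v $ k = 0"
proof -
  have "span {axis i (1::real) | i. i \<in> U} \<subseteq> {v. v $ k = 0}"
    by (rule span_minimal) (use assms(2) in \<open>auto simp: subspace_def axis_def\<close>)
  then show ?thesis using assms(1) by auto
qed

locale group_structure =
  fixes blk :: "'i::finite \<Rightarrow> 'j::finite" and G :: "'j \<Rightarrow> 'i set set" and K :: "'j \<Rightarrow> nat"
  assumes groups_in_block: "\<And>j g. g \<in> G j \<Longrightarrow> g \<subseteq> {i. blk i = j}"
    and groups_disjoint: "\<And>j. pairwise disjnt (G j)"
    and groups_nonempty: "\<And>j g. g \<in> G j \<Longrightarrow> g \<noteq> {}"
    and collections_nonempty: "\<And>j. G j \<noteq> {}"
    and K_pos: "\<And>j. K j \<ge> 1"
begin

lemma finite_groups [simp]: "finite (G j)"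
  using finite_subset[of "G j" UNIV] by simp

lemma blk_eq: "g \<in> G j \<Longrightarrow> i \<in> g \<Longrightarrow> blk i = j"
  using groups_in_block by blast

lemma group_eq: "g \<in> G j \<Longrightarrow> g' \<in> G j' \<Longrightarrow> i \<in> g \<Longrightarrow> i \<in> g' \<Longrightarrow> g = g'"
  using blk_eq[of g j i] blk_eq[of g' j' i] groups_disjoint[of j]
  unfolding pairwise_def disjnt_def by blast

lemma mem_Union_groups_iff:
  "T j \<subseteq> G j \<Longrightarrow> g \<in> G j \<Longrightarrow> i \<in> g \<Longrightarrow> i \<in> \<Union>(T (blk i)) \<longleftrightarrow> g \<in> T j"
  using blk_eq group_eq[of g j _ j i] by blast

definition supported :: "real^'i \<Rightarrow> bool" where
  "supported x \<longleftrightarrow> (\<forall>i. i \<notin> (\<Union>j. \<Union>(G j)) \<longrightarrow> x $ i = 0)"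

definition restrict :: "('j \<Rightarrow> 'i set set) \<Rightarrow> real^'i \<Rightarrow> real^'i" where
  "restrict T x = (\<chi> i. if i \<in> \<Union>(T (blk i)) then x $ i else 0)"

lemma restrict_nth [simp]: "restrict T x $ i = (if i \<in> \<Union>(T (blk i)) then x $ i else 0)"
  by (simp add: restrict_def)

lemma prod_model_iff:
  "x \<in> prod_model blk G K \<longleftrightarrow>
     (\<forall>j. \<exists>H\<subseteq>G j. card H \<le> K j \<and> (\<forall>i. blk i = j \<longrightarrow> x $ i \<noteq> 0 \<longrightarrow> i \<in> \<Union>H))"
  unfolding prod_model_def group_sparse_iff[OF groups_disjoint] by simp

lemma prod_model_scaleR:
  assumes "x \<in> prod_model blk G K"
  shows "c *\<^sub>R x \<in> prod_model blk G K"
  unfolding prod_model_iff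
proof
  fix j
  obtain H where "H \<subseteq> G j" "card H \<le> K j" "\<forall>i. blk i = j \<longrightarrow> x $ i \<noteq> 0 \<longrightarrow> i \<in> \<Union>H"
    using assms unfolding prod_model_iff by blast
  then show "\<exists>H\<subseteq>G j. card H \<le> K j \<and> (\<forall>i. blk i = j \<longrightarrow> (c *\<^sub>R x) $ i \<noteq> 0 \<longrightarrow> i \<in> \<Union>H)"
    by auto
qed

lemma restrict_in_prod_model:
  assumes "\<And>j. T j \<subseteq> G j" "\<And>j. card (T j) \<le> K j"
  shows "restrict T x \<in> prod_model blk G K"
  unfolding prod_model_iff
proof
  show "\<exists>H\<subseteq>G j. card H \<le> K j \<and> (\<forall>i. blk i = j \<longrightarrow> restrict T x $ i \<noteq> 0 \<longrightarrow> i \<in> \<Union>H)" for j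
    using assms by (intro exI[of _ "T j"]) auto
qed

lemma supported_restrict: "(\<And>j. T j \<subseteq> G j) \<Longrightarrow> supported (restrict T x)"
  by (auto simp: supported_def)

lemma supported_if_prod_model:
  assumes "x \<in> prod_model blk G K"
  shows "supported x"
  unfolding supported_def
proof (intro allI impI)
  fix i assume i: "i \<notin> (\<Union>j. \<Union>(G j))"
  obtain H where "H \<subseteq> G (blk i)" "\<forall>i'. blk i' = blk i \<longrightarrow> x $ i' \<noteq> 0 \<longrightarrow> i' \<in> \<Union>H"
    using assms unfolding prod_model_iff by blast
  then show "x $ i = 0" using i by blast
qed

lemma exists_unit_in_prod_model: "\<exists>u\<in>prod_model blk G K. norm u = 1"
proof -
  obtain j g i where g: "g \<in> G j" and i: "i \<in> g"
    using collections_nonempty groups_nonempty by blast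
  have "\<exists>H\<subseteq>G j'. card H \<le> K j' \<and> (\<forall>i'. blk i' = j' \<longrightarrow> axis i 1 $ i' \<noteq> 0 \<longrightarrow> i' \<in> \<Union>H)" for j'
    using g i K_pos[of j] blk_eq[OF g i] by (intro exI[of _ "if j' = j then {g} else {}"]) (auto simp: axis_def)
  then have "axis i 1 \<in> prod_model blk G K"
    unfolding prod_model_iff by blast
  then show ?thesis by force
qed

lemma RIP_prod_model_nonneg:
  assumes rip: "RIP M {a - b | a b. a \<in> prod_model blk G K \<and> b \<in> prod_model blk G K} \<delta>"
  shows "0 \<le> \<delta>"
proof -
  obtain u where u: "u \<in> prod_model blk G K" "norm u = 1" using exists_unit_in_prod_model by blast
  moreover have "0 \<in> prod_model blk G K" using prod_model_scaleR[OF u(1), of 0] by simp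
  ultimately have "u - 0 \<in> {a - b | a b. a \<in> prod_model blk G K \<and> b \<in> prod_model blk G K}"
    by blast
  then show ?thesis using RIP_nonneg[OF rip] u(2) by force
qed

lemma sum_over_groups:
  fixes f :: "'i \<Rightarrow> real"
  assumes "\<And>i. i \<notin> (\<Union>j. \<Union>(G j)) \<Longrightarrow> f i = 0"
  shows "(\<Sum>i\<in>UNIV. f i) = (\<Sum>j\<in>UNIV. \<Sum>g\<in>G j. \<Sum>i\<in>g. f i)"
proof -
  have "(\<Sum>g\<in>G j. \<Sum>i\<in>g. f i) = (\<Sum>i\<in>\<Union>(G j). f i)" for j
    using sum.Union_disjoint[of "G j" f] groups_disjoint[of j] finite_subset[of _ "UNIV::'i set"]
    by (auto simp: pairwise_def disjnt_def)
  then have "(\<Sum>j\<in>UNIV. \<Sum>g\<in>G j. \<Sum>i\<in>g. f i) = (\<Sum>j\<in>UNIV. \<Sum>i\<in>\<Union>(G j). f i)"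
    by simp
  also have "\<dots> = (\<Sum>i\<in>(\<Union>j. \<Union>(G j)). f i)"
    by (rule sum.UNION_disjoint[symmetric]) (auto dest: blk_eq)
  also have "\<dots> = (\<Sum>i\<in>UNIV. f i)"
    by (rule sum.mono_neutral_left) (auto intro: assms)
  finally show ?thesis by simp
qed

lemma inner_eq_sum_groups:
  assumes "supported x"
  shows "y \<bullet> x = (\<Sum>j\<in>UNIV. \<Sum>g\<in>G j. gpart g y \<bullet> gpart g x)"
proof -
  have "y \<bullet> x = (\<Sum>i\<in>UNIV. y $ i * x $ i)" by (simp add: inner_vec_def)
  also have "\<dots> = (\<Sum>j\<in>UNIV. \<Sum>g\<in>G j. \<Sum>i\<in>g. y $ i * x $ i)"
    by (rule sum_over_groups) (use assms in \<open>simp add: supported_def\<close>)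
  finally show ?thesis by (simp add: inner_gpart)
qed

lemma inner_le_sum_norm_gpart:
  "supported x \<Longrightarrow> y \<bullet> x \<le> (\<Sum>j\<in>UNIV. \<Sum>g\<in>G j. norm (gpart g y) * norm (gpart g x))"
  unfolding inner_eq_sum_groups by (intro sum_mono norm_cauchy_schwarz)

lemma gpart_restrict:
  "T j \<subseteq> G j \<Longrightarrow> g \<in> G j \<Longrightarrow> gpart g (restrict T x) = (if g \<in> T j then gpart g x else 0)"
  using mem_Union_groups_iff[of T j g] by (auto simp: vec_eq_iff)

lemma norm_restrict:
  assumes T: "\<And>j. T j \<subseteq> G j"
  shows "norm (restrict T x) = L2_set (\<lambda>j. L2_set (\<lambda>g. norm (gpart g x)) (T j)) UNIV"
proof -
  have "(norm (restrict T x))\<^sup>2 = (\<Sum>j\<in>UNIV. \<Sum>g\<in>G j. gpart g (restrict T x) \<bullet> gpart g (restrict T x))"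
    unfolding power2_norm_eq_inner by (rule inner_eq_sum_groups[OF supported_restrict[OF T]])
  also have "\<dots> = (\<Sum>j\<in>UNIV. \<Sum>g\<in>G j. if g \<in> T j then (norm (gpart g x))\<^sup>2 else 0)"
    using T by (intro sum.cong refl) (simp add: gpart_restrict power2_norm_eq_inner)
  also have "\<dots> = (\<Sum>j\<in>UNIV. \<Sum>g\<in>T j. (norm (gpart g x))\<^sup>2)"
    using T by (simp add: sum.If_cases Int_absorb1 Int_absorb2)
  finally show ?thesis
    by (simp add: L2_set_def sum_nonneg real_sqrt_unique)
qed

definition block_norm :: "'j \<Rightarrow> real^'i \<Rightarrow> real" where
  "block_norm j x = (\<Sum>g\<in>G j. norm (gpart g x))"

lemma objective_eq:
  assumes "supported x"
  shows "objective blk G K x = ereal (\<Sum>j\<in>UNIV. block_norm j x / sqrt (K j))"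
proof -
  have "group_norm (G j) (blockpart blk j x) = ereal (block_norm j x)" for j
  proof -
    have "blockpart blk j x $ i = 0" if "i \<notin> \<Union>(G j)" for i
    proof (cases "blk i = j")
      case True
      then have "i \<notin> (\<Union>j'. \<Union>(G j'))" using that blk_eq by blast
      then show ?thesis using assms by (simp add: supported_def)
    qed simp
    then have "blockpart blk j x \<in> span {axis i (1::real) | i. i \<in> \<Union>(G j)}"
      by (rule in_span_axis_if_zero_outside)
    moreover have "gpart g (blockpart blk j x) = gpart g x" if "g \<in> G j" for g
      using that by (simp add: vec_eq_iff blk_eq)
    ultimately show ?thesis by (simp add: group_norm_def block_norm_def)
  qed
  then show ?thesis by (simp add: objective_def)
qed

lemma objective_eq_infinity:
  assumes "\<not> supported x"
  shows "objective blk G K x = \<infinity>"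
proof -
  obtain k where k: "x $ k \<noteq> 0" "k \<notin> (\<Union>j. \<Union>(G j))" using assms by (auto simp: supported_def)
  then have "blockpart blk (blk k) x \<notin> span {axis i (1::real) | i. i \<in> \<Union>(G (blk k))}"
    using nth_eq_zero_if_in_span_axis[of "blockpart blk (blk k) x" "\<Union>(G (blk k))" k] by auto
  then have "group_norm (G (blk k)) (blockpart blk (blk k) x) = \<infinity>"
    by (simp add: group_norm_def)
  then have "ereal (1 / sqrt (K (blk k))) * group_norm (G (blk k)) (blockpart blk (blk k) x) = \<infinity>"
    using K_pos[of "blk k"] by simp
  then show ?thesis unfolding objective_def sum_Pinfty by auto
qed

definition top_groups :: "real^'i \<Rightarrow> ('j \<Rightarrow> 'i set set) \<Rightarrow> bool" where
  "top_groups x T \<longleftrightarrow> (\<forall>j. T j \<subseteq> G j \<and> card (T j) = min (K j) (card (G j)) \<and>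
     (\<forall>H\<subseteq>G j. card H \<le> K j \<longrightarrow> (\<Sum>g\<in>H. norm (gpart g x)) \<le> (\<Sum>g\<in>T j. norm (gpart g x))) \<and>
     (\<forall>g\<in>G j - T j. \<forall>g'\<in>T j. norm (gpart g x) \<le> norm (gpart g' x)))"

lemma top_groups_exist: "\<exists>T. top_groups x T"
proof -
  have "\<exists>T. T \<subseteq> G j \<and> card T = min (K j) (card (G j)) \<and>
     (\<forall>H\<subseteq>G j. card H \<le> K j \<longrightarrow> (\<Sum>g\<in>H. norm (gpart g x)) \<le> (\<Sum>g\<in>T. norm (gpart g x))) \<and>
     (\<forall>g\<in>G j - T. \<forall>g'\<in>T. norm (gpart g x) \<le> norm (gpart g' x))" for j
  proof -
    obtain T where "T \<subseteq> G j" "card T = min (K j) (card (G j))"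
      "\<forall>H\<subseteq>G j. card H \<le> min (K j) (card (G j)) \<longrightarrow> (\<Sum>g\<in>H. norm (gpart g x)) \<le> (\<Sum>g\<in>T. norm (gpart g x))"
      "\<forall>g\<in>G j - T. \<forall>g'\<in>T. norm (gpart g x) \<le> norm (gpart g' x)"
      using exists_max_sum_subset[of "G j" "min (K j) (card (G j))" "\<lambda>g. norm (gpart g x)"] by auto
    moreover have "card H \<le> min (K j) (card (G j))" if "H \<subseteq> G j" "card H \<le> K j" for H
      using that card_mono[OF finite_groups] by simp
    ultimately show ?thesis by blast
  qed
  then show ?thesis unfolding top_groups_def by (intro choice) blast
qed

lemma top_groups_tail_le:
  assumes T: "top_groups x T" and g: "g \<in> G j - T j"
  shows "norm (gpart g x) * sqrt (K j) \<le> L2_set (\<lambda>g. norm (gpart g x)) (T j)"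
proof -
  have TG: "T j \<subseteq> G j" using T by (simp add: top_groups_def)
  then have "card (T j) < card (G j)" using g by (intro psubset_card_mono) auto
  then have cT: "card (T j) = K j" using T by (simp add: top_groups_def)
  have "(norm (gpart g x) * sqrt (K j))\<^sup>2 = (\<Sum>g'\<in>T j. (norm (gpart g x))\<^sup>2)"
    by (simp add: cT power_mult_distrib)
  also have "\<dots> \<le> (\<Sum>g'\<in>T j. (norm (gpart g' x))\<^sup>2)"
    using T g by (intro sum_mono power_mono) (auto simp: top_groups_def)
  also have "\<dots> = (L2_set (\<lambda>g. norm (gpart g x)) (T j))\<^sup>2"
    by (simp add: L2_set_def sum_nonneg)
  finally show ?thesis by (rule power2_le_imp_le) simp
qed

lemma block_tail_le:
  assumes x0: "x0 \<in> prod_model blk G K" and T: "top_groups (x - x0) T"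
  shows "(\<Sum>g\<in>G j - T j. norm (gpart g (x - x0))) - (\<Sum>g\<in>T j. norm (gpart g (x - x0)))
    \<le> block_norm j x - block_norm j x0"
proof -
  define a where "a g = norm (gpart g (x - x0))" for g
  obtain H where H: "H \<subseteq> G j" "card H \<le> K j" "\<forall>i. blk i = j \<longrightarrow> x0 $ i \<noteq> 0 \<longrightarrow> i \<in> \<Union>H"
    using x0 unfolding prod_model_iff by blast
  have off_H: "gpart g x0 = 0" if g: "g \<in> G j - H" for g
  proof (rule vec_eq_iff[THEN iffD2], rule allI)
    fix i
    have "x0 $ i = 0" if "i \<in> g"
      using g that H(1,3) blk_eq[of g j i] group_eq[of g j _ j i] by blast
    then show "gpart g x0 $ i = 0 $ i" by simp
  qed
  have TG: "T j \<subseteq> G j" using T by (simp add: top_groups_def)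
  have split: "sum f (G j) = sum f (G j - H) + sum f H" for f :: "'i set \<Rightarrow> real"
    using sum.subset_diff[OF H(1) finite_groups] .
  have triangle: "norm (gpart g x0) - a g \<le> norm (gpart g x)" for g
    using norm_triangle_ineq4[of "gpart g x" "gpart g x - gpart g x0"] by (simp add: a_def gpart_diff)
  have "block_norm j x0 = (\<Sum>g\<in>H. norm (gpart g x0))"
    unfolding block_norm_def split using off_H by simp
  moreover have "block_norm j x = sum a (G j - H) + (\<Sum>g\<in>H. norm (gpart g x))"
    unfolding block_norm_def split using off_H by (simp add: a_def gpart_diff)
  moreover have "(\<Sum>g\<in>H. norm (gpart g x0)) - sum a H \<le> (\<Sum>g\<in>H. norm (gpart g x))"
    using triangle by (simp add: sum_subtractf[symmetric] sum_mono)
  moreover have "sum a H \<le> sum a (T j)"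
    using T H(1,2) by (simp add: top_groups_def a_def)
  moreover have "sum a (G j - T j) = sum a (G j) - sum a (T j)"
    using TG by (simp add: sum_diff)
  moreover have "sum a (G j - H) = sum a (G j) - sum a H"
    using H(1) by (simp add: sum_diff)
  ultimately show ?thesis by (simp add: a_def)
qed

lemma cone_condition:
  assumes x0: "x0 \<in> prod_model blk G K" and T: "top_groups (x - x0) T"
    and le: "(\<Sum>j\<in>UNIV. block_norm j x / sqrt (K j)) \<le> (\<Sum>j\<in>UNIV. block_norm j x0 / sqrt (K j))"
  shows "(\<Sum>j\<in>UNIV. (\<Sum>g\<in>G j - T j. norm (gpart g (x - x0))) / sqrt (K j))
    \<le> (\<Sum>j\<in>UNIV. (\<Sum>g\<in>T j. norm (gpart g (x - x0))) / sqrt (K j))"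
proof -
  have "(\<Sum>j\<in>UNIV. (\<Sum>g\<in>G j - T j. norm (gpart g (x - x0))) / sqrt (K j))
      - (\<Sum>j\<in>UNIV. (\<Sum>g\<in>T j. norm (gpart g (x - x0))) / sqrt (K j))
    = (\<Sum>j\<in>UNIV. ((\<Sum>g\<in>G j - T j. norm (gpart g (x - x0))) - (\<Sum>g\<in>T j. norm (gpart g (x - x0)))) / sqrt (K j))"
    by (simp add: sum_subtractf diff_divide_distrib)
  also have "\<dots> \<le> (\<Sum>j\<in>UNIV. (block_norm j x - block_norm j x0) / sqrt (K j))"
    by (intro sum_mono divide_right_mono block_tail_le[OF x0 T]) simp
  also have "\<dots> = (\<Sum>j\<in>UNIV. block_norm j x / sqrt (K j)) - (\<Sum>j\<in>UNIV. block_norm j x0 / sqrt (K j))"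
    by (simp add: sum_subtractf diff_divide_distrib)
  finally show ?thesis using le by linarith
qed

lemma inner_le_sum_L2_top_groups:
  assumes w: "supported w" and S: "top_groups y S"
    and bound: "\<And>j g. g \<in> G j \<Longrightarrow> norm (gpart g w) \<le> m j / sqrt (K j)"
    and total: "\<And>j. (\<Sum>g\<in>G j. norm (gpart g w)) \<le> m j * sqrt (K j)"
  shows "y \<bullet> w \<le> (\<Sum>j\<in>UNIV. m j * L2_set (\<lambda>g. norm (gpart g y)) (S j))"
proof -
  have "(\<Sum>g\<in>G j. norm (gpart g w) * norm (gpart g y)) \<le> m j * L2_set (\<lambda>g. norm (gpart g y)) (S j)" for j
  proof (rule sum_mult_le_L2_set_top)
    obtain g where "g \<in> G j" using collections_nonempty by blast
    then show "0 \<le> m j"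
      using order_trans[OF norm_ge_zero bound] K_pos[of j] by (force simp: zero_le_divide_iff)
  qed (use S K_pos bound total in \<open>auto simp: top_groups_def\<close>)
  then have "(\<Sum>j\<in>UNIV. \<Sum>g\<in>G j. norm (gpart g y) * norm (gpart g w))
      \<le> (\<Sum>j\<in>UNIV. m j * L2_set (\<lambda>g. norm (gpart g y)) (S j))"
    by (simp add: sum_mono mult.commute)
  then show ?thesis by (rule order_trans[OF inner_le_sum_norm_gpart[OF w]])
qed

lemma exists_atom_inner_ge:
  assumes "\<And>j. S j \<subseteq> G j" "\<And>j. card (S j) \<le> K j"
  shows "\<exists>c\<in>prod_model blk G K \<inter> sphere 0 1. norm (restrict S y) \<le> y \<bullet> c"
proof (cases "restrict S y = 0")
  case True
  obtain u where u: "u \<in> prod_model blk G K" "norm u = 1"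
    using exists_unit_in_prod_model by blast
  then have "u \<in> prod_model blk G K \<inter> sphere 0 1" "- u \<in> prod_model blk G K \<inter> sphere 0 1"
    using prod_model_scaleR[of u "- 1"] by auto
  moreover have "0 \<le> y \<bullet> u \<or> 0 \<le> y \<bullet> (- u)" by auto
  ultimately show ?thesis using True by (metis norm_zero)
next
  case False
  define v where "v = restrict S y"
  have "y \<bullet> v = v \<bullet> v" unfolding inner_vec_def by (intro sum.cong) (auto simp: v_def)
  then have "norm v = y \<bullet> ((1 / norm v) *\<^sub>R v)"
    using False by (simp add: v_def power2_norm_eq_inner[symmetric] power2_eq_square)
  moreover have "(1 / norm v) *\<^sub>R v \<in> prod_model blk G K \<inter> sphere 0 1"
    using False prod_model_scaleR[OF restrict_in_prod_model[OF assms]] by (simp add: v_def)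
  ultimately show ?thesis by (metis order_refl v_def)
qed

definition tail_weight :: "real^'i \<Rightarrow> ('j \<Rightarrow> 'i set set) \<Rightarrow> 'j \<Rightarrow> real" where
  "tail_weight z T j = max (L2_set (\<lambda>g. norm (gpart g z)) (T j))
     ((\<Sum>g\<in>G j - T j. norm (gpart g z)) / sqrt (K j))"

lemma tail_weight_nonneg: "0 \<le> tail_weight z T j"
  by (simp add: tail_weight_def le_max_iff_disj)

lemma L2_set_tail_weight_le:
  assumes T: "top_groups z T"
    and cone: "(\<Sum>j\<in>UNIV. (\<Sum>g\<in>G j - T j. norm (gpart g z)) / sqrt (K j))
      \<le> (\<Sum>j\<in>UNIV. (\<Sum>g\<in>T j. norm (gpart g z)) / sqrt (K j))"
  shows "L2_set (tail_weight z T) UNIV \<le> tail_factor CARD('j) * norm (restrict T z)"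
proof -
  have TG: "\<And>j. T j \<subseteq> G j" and cT: "\<And>j. card (T j) \<le> K j"
    using T by (auto simp: top_groups_def)
  have "(\<Sum>g\<in>T j. norm (gpart g z)) / sqrt (K j) \<le> L2_set (\<lambda>g. norm (gpart g z)) (T j)" for j
  proof -
    have "(\<Sum>g\<in>T j. norm (gpart g z)) \<le> sqrt (card (T j)) * L2_set (\<lambda>g. norm (gpart g z)) (T j)"
      by (rule sum_le_sqrt_card_mult_L2_set) simp
    also have "\<dots> \<le> sqrt (K j) * L2_set (\<lambda>g. norm (gpart g z)) (T j)"
      using cT[of j] by (intro mult_right_mono) auto
    finally show ?thesis using K_pos[of j] by (simp add: pos_divide_le_eq mult.commute)
  qed
  then have "(\<Sum>j\<in>UNIV. (\<Sum>g\<in>G j - T j. norm (gpart g z)) / sqrt (K j))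
      \<le> (\<Sum>j\<in>UNIV. L2_set (\<lambda>g. norm (gpart g z)) (T j))"
    using cone by (meson order_trans sum_mono)
  then show ?thesis
    unfolding norm_restrict[OF TG] tail_weight_def[abs_def]
    by (intro L2_set_max_le) (auto intro!: sum_nonneg divide_nonneg_nonneg)
qed

lemma gpart_diff_restrict:
  "top_groups z T \<Longrightarrow> g \<in> G j \<Longrightarrow> gpart g (z - restrict T z) = (if g \<in> T j then 0 else gpart g z)"
  using gpart_restrict[of T j g z] by (simp add: gpart_diff top_groups_def)

lemma norm_gpart_tail_le:
  assumes T: "top_groups z T" and g: "g \<in> G j"
  shows "norm (gpart g (z - restrict T z)) \<le> tail_weight z T j / sqrt (K j)"
proof (cases "g \<in> T j")
  case True
  then show ?thesis using gpart_diff_restrict[OF T g] by (simp add: tail_weight_nonneg)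
next
  case False
  then have "norm (gpart g z) * sqrt (K j) \<le> L2_set (\<lambda>g. norm (gpart g z)) (T j)"
    using top_groups_tail_le[OF T] g by blast
  then show ?thesis
    using gpart_diff_restrict[OF T g] False K_pos[of j]
    by (simp add: tail_weight_def pos_le_divide_eq le_max_iff_disj)
qed

lemma sum_norm_gpart_tail_le:
  assumes T: "top_groups z T"
  shows "(\<Sum>g\<in>G j. norm (gpart g (z - restrict T z))) \<le> tail_weight z T j * sqrt (K j)"
proof -
  have sK: "sqrt (K j) > 0" using K_pos[of j] by simp
  have "(\<Sum>g\<in>G j. norm (gpart g (z - restrict T z))) = (\<Sum>g\<in>G j. if g \<in> T j then 0 else norm (gpart g z))"
    using gpart_diff_restrict[OF T] by (intro sum.cong refl) simp
  also have "\<dots> = ((\<Sum>g\<in>G j - T j. norm (gpart g z)) / sqrt (K j)) * sqrt (K j)"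
    using sK by (simp add: sum.If_cases Diff_eq)
  also have "\<dots> \<le> tail_weight z T j * sqrt (K j)"
    using sK by (intro mult_right_mono) (auto simp: tail_weight_def)
  finally show ?thesis .
qed

lemma inner_tail_le:
  assumes z: "supported z" and T: "top_groups z T"
    and cone: "(\<Sum>j\<in>UNIV. (\<Sum>g\<in>G j - T j. norm (gpart g z)) / sqrt (K j))
      \<le> (\<Sum>j\<in>UNIV. (\<Sum>g\<in>T j. norm (gpart g z)) / sqrt (K j))"
  shows "\<exists>c\<in>prod_model blk G K \<inter> sphere 0 1.
    y \<bullet> (z - restrict T z) \<le> tail_factor CARD('j) * norm (restrict T z) * (y \<bullet> c)"
proof -
  obtain S where S: "top_groups y S" using top_groups_exist by blast
  have "supported (z - restrict T z)" using z by (simp add: supported_def)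
  then have "y \<bullet> (z - restrict T z) \<le> (\<Sum>j\<in>UNIV. tail_weight z T j * L2_set (\<lambda>g. norm (gpart g y)) (S j))"
    using S norm_gpart_tail_le[OF T] sum_norm_gpart_tail_le[OF T] by (rule inner_le_sum_L2_top_groups)
  also have "\<dots> \<le> L2_set (tail_weight z T) UNIV * norm (restrict S y)"
    using L2_set_mult_ineq[of "tail_weight z T" "\<lambda>j. L2_set (\<lambda>g. norm (gpart g y)) (S j)" UNIV] S
    by (simp add: norm_restrict top_groups_def tail_weight_nonneg)
  also have "\<dots> \<le> tail_factor CARD('j) * norm (restrict T z) * norm (restrict S y)"
    using L2_set_tail_weight_le[OF T cone] by (intro mult_right_mono) simp_all
  also obtain c where c: "c \<in> prod_model blk G K \<inter> sphere 0 1" "norm (restrict S y) \<le> y \<bullet> c"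
    using exists_atom_inner_ge[of S y] S by (auto simp: top_groups_def)
  then have "tail_factor CARD('j) * norm (restrict T z) * norm (restrict S y)
      \<le> tail_factor CARD('j) * norm (restrict T z) * (y \<bullet> c)"
    using tail_factor_pos[of "CARD('j)"] by (intro mult_left_mono) auto
  finally show ?thesis using c(1) by blast
qed

lemma minimizer_error_decomposition:
  assumes x0: "x0 \<in> prod_model blk G K" and obj: "objective blk G K x \<le> objective blk G K x0"
  obtains h c0 where "h \<in> prod_model blk G K"
    and "c0 \<in> closure (convex hull (prod_model blk G K \<inter> sphere 0 1))"
    and "h \<bullet> (x - x0 - h) = 0" and "x - x0 - h = (tail_factor CARD('j) * norm h) *\<^sub>R c0"
proof -
  let ?C = "closure (convex hull (prod_model blk G K \<inter> sphere 0 1))"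
  have x0_supp: "supported x0" by (rule supported_if_prod_model[OF x0])
  moreover have x_supp: "supported x"
    using obj objective_eq[OF x0_supp] objective_eq_infinity[of x] by force
  ultimately have z_supp: "supported (x - x0)" by (simp add: supported_def)
  obtain T where T: "top_groups (x - x0) T" using top_groups_exist by blast
  define h where "h = restrict T (x - x0)"
  have "(\<Sum>j\<in>UNIV. block_norm j x / sqrt (K j)) \<le> (\<Sum>j\<in>UNIV. block_norm j x0 / sqrt (K j))"
    using obj unfolding objective_eq[OF x_supp] objective_eq[OF x0_supp] by simp
  note tail = inner_tail_le[OF z_supp T cone_condition[OF x0 T this]]
  have atoms_sub: "prod_model blk G K \<inter> sphere 0 1 \<subseteq> ?C"
    by (meson closure_subset hull_subset subset_trans)
  have "\<exists>c\<in>?C. y \<bullet> (x - x0 - h) \<le> (tail_factor CARD('j) * norm h) * (y \<bullet> c)" for y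
    using tail[of y] atoms_sub unfolding h_def by blast
  then have "\<exists>c0\<in>?C. x - x0 - h = (tail_factor CARD('j) * norm h) *\<^sub>R c0"
    using tail_factor_pos[of "CARD('j)"]
    by (intro scaled_mem_closed_convex_if_inner_le convex_closure convex_convex_hull closed_closure) auto
  then obtain c0 where c0: "c0 \<in> ?C" "x - x0 - h = (tail_factor CARD('j) * norm h) *\<^sub>R c0"
    by blast
  have h: "h \<in> prod_model blk G K"
    using T unfolding h_def by (intro restrict_in_prod_model) (auto simp: top_groups_def)
  have "h \<bullet> (x - x0 - h) = 0"
    unfolding h_def inner_vec_def by (intro sum.neutral) simp
  from that[OF h c0(1) this c0(2)] show ?thesis .
qed

end

theorem theorem6:
  fixes blk :: "'i::finite \<Rightarrow> 'j::finite"
    and G :: "'j \<Rightarrow> 'i set set"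
    and K :: "'j \<Rightarrow> nat"
    and M :: "real^'i \<Rightarrow> 'f::{real_inner, complete_space}"
    and \<delta> \<eta> \<epsilon> :: real
    and x0 xs :: "real^'i"
    and e :: 'f
  assumes groups_in_block: "\<And>j g. g \<in> G j \<Longrightarrow> g \<subseteq> {i. blk i = j}"
    and groups_disjoint: "\<And>j. pairwise disjnt (G j)"
    and groups_nonempty: "\<And>j g. g \<in> G j \<Longrightarrow> g \<noteq> {}"
    and collections_nonempty: "\<And>j. G j \<noteq> {}"
    and K_pos: "\<And>j. K j \<ge> 1"
    and M_lin: "linear M"
    and rip: "RIP M {a - b | a b. a \<in> prod_model blk G K \<and> b \<in> prod_model blk G K} \<delta>"
    and delta_bound: "if CARD('j) = 1 then \<delta> < 1 / sqrt 2
                      else \<delta> < sqrt (1 / (2 + real CARD('j)))"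
    and x0_in: "x0 \<in> prod_model blk G K"
    and eta_le: "\<eta> \<le> \<epsilon>"
    and e_le: "norm e \<le> \<eta>"
    and xs_feasible: "norm (M xs - (M x0 + e)) \<le> \<epsilon>"
    and xs_min: "\<And>x. norm (M x - (M x0 + e)) \<le> \<epsilon> \<Longrightarrow> objective blk G K xs \<le> objective blk G K x"
  shows "ereal (norm (xs - x0)) \<le> atomic_norm (prod_model blk G K) (xs - x0) \<and>
         atomic_norm (prod_model blk G K) (xs - x0) \<le>
           ereal ((if CARD('j) = 1 then 2 * sqrt (1 + \<delta>) / (1 - \<delta> * sqrt 2)
                   else (1 + sqrt (1 + real CARD('j))) * sqrt (1 + \<delta>)
                        / (1 - \<delta> * sqrt (2 + real CARD('j)))) * (\<eta> + \<epsilon>))"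
proof -
  interpret group_structure blk G K
    using groups_in_block groups_disjoint groups_nonempty collections_nonempty K_pos
    by unfold_locales
  let ?D = "tail_factor CARD('j)"
  obtain h c0 where h: "h \<in> prod_model blk G K"
    and c0: "c0 \<in> closure (convex hull (prod_model blk G K \<inter> sphere 0 1))"
    and orth: "h \<bullet> (xs - x0 - h) = 0" and w: "xs - x0 - h = (?D * norm h) *\<^sub>R c0"
  proof (rule minimizer_error_decomposition[OF x0_in xs_min])
    show "norm (M x0 - (M x0 + e)) \<le> \<epsilon>" using e_le eta_le by simp
  qed
  have "norm (M (h + (xs - x0 - h))) \<le> \<eta> + \<epsilon>"
    using norm_triangle_ineq[of "M xs - (M x0 + e)" e] xs_feasible e_le M_lin
    by (simp add: linear_diff algebra_simps)
  moreover have "\<delta> * sqrt (1 + ?D\<^sup>2) < 1"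
    using delta_bound by (auto simp: tail_factor_def real_sqrt_divide pos_less_divide_eq split: if_splits)
  ultimately have "atomic_norm (prod_model blk G K) (xs - x0)
      \<le> ereal ((1 + ?D) * sqrt (1 + \<delta>) * (\<eta> + \<epsilon>) / (1 - \<delta> * sqrt (1 + ?D\<^sup>2)))"
    using atomic_norm_error_le[OF M_lin rip RIP_prod_model_nonneg[OF rip] prod_model_scaleR h c0 w orth
        less_imp_le[OF tail_factor_pos]]
    by simp
  also have "(1 + ?D) * sqrt (1 + \<delta>) * (\<eta> + \<epsilon>) / (1 - \<delta> * sqrt (1 + ?D\<^sup>2))
      = (if CARD('j) = 1 then 2 * sqrt (1 + \<delta>) / (1 - \<delta> * sqrt 2)
         else (1 + sqrt (1 + real CARD('j))) * sqrt (1 + \<delta>)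
              / (1 - \<delta> * sqrt (2 + real CARD('j)))) * (\<eta> + \<epsilon>)"
    by (simp add: tail_factor_def)
  finally show ?thesis using norm_le_atomic_norm by blast
qed

end
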